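(* Let $n,t\ge1$, $q\ge2$, $b\ge1$. Then \[ N_{q,b}^+(n,t)=q^{t(b-1)}\sum_{i=0}^{t-1}\binom{n+t}{i}(q-1)^i\big[1-(-1)^{t-i}\big]. \]
   Context: $\Sigma_q=\{0,\ldots,q-1\}$. A $b$-burst-insertion at position $i\in[1,n+1]$ transforms $x_1\cdots x_n$ into $x_1\cdots x_{i-1}y_1\cdots y_b x_i\cdots x_n$ for arbitrary $y_1\cdots y_b\in\Sigma_q^b$. $\mathcal{I}_{t,b}(\boldsymbol{x})$ is the set of all length-$(n+tb)$ sequences obtainable from $\boldsymbol{x}$ by $t$ successive $b$-burst-insertions. $N_{q,b}^+(n,t)=\max\{|\mathcal{I}_{t,b}(\boldsymbol{x})\cap\mathcal{I}_{t,b}(\boldsymbol{y})|:\boldsymbol{x}\ne\boldsymbol{y}\in\Sigma_q^n\}$. Convention: $\binom{m}{i}=0$ if $m<i$. *)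

theory Defs
  imports Main
begin

definition seqs :: "nat \<Rightarrow> nat \<Rightarrow> nat list set" where
  "seqs q n = {x. length x = n \<and> set x \<subseteq> {0..<q}}"

text \<open>All results of a single b-burst-insertion into x (insertion position i+1, i = 0..length x).\<close>
definition burst_ins :: "nat \<Rightarrow> nat \<Rightarrow> nat list \<Rightarrow> nat list set" where
  "burst_ins q b x = {take i x @ y @ drop i x | i y. i \<le> length x \<and> y \<in> seqs q b}"

fun burst_ins_ball :: "nat \<Rightarrow> nat \<Rightarrow> nat \<Rightarrow> nat list \<Rightarrow> nat list set" where
  "burst_ins_ball q b 0 x = {x}"
| "burst_ins_ball q b (Suc t) x = (\<Union>z \<in> burst_ins_ball q b t x. burst_ins q b z)"

definition N_plus :: "nat \<Rightarrow> nat \<Rightarrow> nat \<Rightarrow> nat \<Rightarrow> nat" where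
  "N_plus q b n t = Max {card (burst_ins_ball q b t x \<inter> burst_ins_ball q b t y) | x y.
      x \<in> seqs q n \<and> y \<in> seqs q n \<and> x \<noteq> y}"

end

theory Submission
  imports Defs
begin

text \<open>Sort the sequences of \<open>\<I>\<^sub>t(x)\<close> by their first symbol \<open>s\<close>. If \<open>s\<close> is the first symbol
  of \<open>x\<close>, the remaining tails form \<open>\<I>\<^sub>t\<close> of the tail of \<open>x\<close>; otherwise \<open>s\<close> must open a
  burst, and the tails are an arbitrary word of length \<open>b - 1\<close> followed by an element of
  \<open>\<I>\<^sub>t\<^sub>-\<^sub>1(x)\<close>. This yields Levenshtein-type recurrences: \<open>|\<I>\<^sub>t(x)| = q\<^bsup>t(b-1)\<^esup> K(n,t)\<close> with
  \<open>K(n+1,t+1) = K(n,t+1) + (q-1) K(n+1,t)\<close>, and for \<open>x \<noteq> y\<close> the intersection is bounded by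
  \<open>q\<^bsup>t(b-1)\<^esup> G(n,t)\<close>: a common first symbol is stripped, and otherwise the two symbols
  heading \<open>x\<close> resp. \<open>y\<close> contribute at most \<open>K(n,t-1)\<close> each and the other \<open>q-2\<close> symbols
  \<open>G(n,t-1)\<close>. The sequences
  \<open>0 0\<dots>0\<close> and \<open>1 0\<dots>0\<close> attain the bound, and \<open>G\<close> satisfies the same Pascal recurrence
  as the stated binomial sum.\<close>

section \<open>A normal form for burst-insertions\<close>

text \<open>\<open>burst_reach q b x t z\<close>: \<open>z\<close> arises from \<open>x\<close> by \<open>t\<close> burst-insertions each placed
  directly in front of a symbol of \<open>x\<close> or at its end. Every element of
  \<open>burst_ins_ball q b t x\<close> has such a derivation, since a burst inserted inside an earlier
  burst can be rearranged into two adjacent bursts.\<close>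

inductive burst_reach :: "nat \<Rightarrow> nat \<Rightarrow> nat list \<Rightarrow> nat \<Rightarrow> nat list \<Rightarrow> bool" for q b where
  Nil: "burst_reach q b [] 0 []"
| Cons: "burst_reach q b x t z \<Longrightarrow> burst_reach q b (a # x) t (a # z)"
| Burst: "burst_reach q b x t z \<Longrightarrow> y \<in> seqs q b \<Longrightarrow> burst_reach q b x (Suc t) (y @ z)"

lemma burst_reach_0_iff: "burst_reach q b x 0 z \<longleftrightarrow> z = x"
proof
  have "burst_reach q b x t z \<Longrightarrow> t = 0 \<Longrightarrow> z = x" for t
    by (induction rule: burst_reach.induct) auto
  then show "burst_reach q b x 0 z \<Longrightarrow> z = x" by blast
next
  have "burst_reach q b x 0 x" by (induction x) (auto intro: burst_reach.intros)
  then show "z = x \<Longrightarrow> burst_reach q b x 0 z" by simp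
qed

lemma burst_reach_insert:
  assumes "burst_reach q b x t z" "i \<le> length z" "y \<in> seqs q b"
  shows "burst_reach q b x (Suc t) (take i z @ y @ drop i z)"
  using assms
proof (induction arbitrary: i y rule: burst_reach.induct)
  case Nil
  then show ?case using burst_reach.Burst[OF burst_reach.Nil] by simp
next
  case (Cons x t z a)
  show ?case
  proof (cases i)
    case 0
    then show ?thesis
      using burst_reach.Burst[OF burst_reach.Cons[OF Cons.hyps], of y] Cons.prems by simp
  next
    case (Suc j)
    then show ?thesis using burst_reach.Cons[OF Cons.IH[of j y]] Cons.prems by simp
  qed
next
  case (Burst x t z y0)
  have ly0: "length y0 = b" using Burst.hyps(2) by (simp add: seqs_def)
  show ?case
  proof (cases "b \<le> i")
    case True
    have "burst_reach q b x (Suc t) (take (i - b) z @ y @ drop (i - b) z)"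
      using Burst.IH[of "i - b" y] Burst.prems True ly0 by simp
    from burst_reach.Burst[OF this Burst.hyps(2)] show ?thesis using True ly0 by simp
  next
    case False
    text \<open>\<open>y\<close> lands inside the burst \<open>y0\<close>; the result is the burst \<open>w1\<close> followed by \<open>w2\<close>.\<close>
    define w1 where "w1 = take i y0 @ take (b - i) y"
    define w2 where "w2 = drop (b - i) y @ drop i y0"
    have ly: "length y = b" using Burst.prems by (simp add: seqs_def)
    have "w1 \<in> seqs q b" "w2 \<in> seqs q b"
      using Burst.hyps(2) Burst.prems False ly ly0 unfolding w1_def w2_def seqs_def
      by (auto dest: in_set_takeD in_set_dropD)
    then have "burst_reach q b x (Suc (Suc t)) (w1 @ w2 @ z)"
      using burst_reach.Burst[OF burst_reach.Burst[OF Burst.hyps(1)]] by simp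
    moreover have "take i (y0 @ z) @ y @ drop i (y0 @ z) = w1 @ w2 @ z"
      using False ly0 unfolding w1_def w2_def by simp
    ultimately show ?thesis by simp
  qed
qed

lemma burst_reach_SucE:
  assumes "burst_reach q b x (Suc t) w"
  obtains z i y where "burst_reach q b x t z" "i \<le> length z" "y \<in> seqs q b"
    "w = take i z @ y @ drop i z"
proof -
  have "burst_reach q b x t' w \<Longrightarrow> t' = Suc t \<Longrightarrow>
    \<exists>z i y. burst_reach q b x t z \<and> i \<le> length z \<and> y \<in> seqs q b \<and> w = take i z @ y @ drop i z"
    for t'
  proof (induction arbitrary: t rule: burst_reach.induct)
    case (Cons x t0 z a)
    then obtain z0 i y where "burst_reach q b x t z0" "i \<le> length z0" "y \<in> seqs q b"
      "z = take i z0 @ y @ drop i z0" by blast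
    then show ?case
      by (intro exI[of _ "a # z0"] exI[of _ "Suc i"] exI[of _ y]) (auto intro: burst_reach.Cons)
  next
    case (Burst x t0 z y)
    then show ?case by (intro exI[of _ z] exI[of _ 0] exI[of _ y]) auto
  qed simp
  with assms that show ?thesis by blast
qed

lemma burst_ins_ball_eq_reach: "burst_ins_ball q b t x = {z. burst_reach q b x t z}"
proof (induction t)
  case 0
  then show ?case by (auto simp: burst_reach_0_iff)
next
  case (Suc t)
  show ?case
  proof (intro set_eqI iffI)
    fix w assume "w \<in> burst_ins_ball q b (Suc t) x"
    then obtain z where z: "burst_reach q b x t z" "w \<in> burst_ins q b z" using Suc by auto
    then obtain i y where "i \<le> length z" "y \<in> seqs q b" "w = take i z @ y @ drop i z"
      unfolding burst_ins_def by blast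
    with z show "w \<in> {z. burst_reach q b x (Suc t) z}" using burst_reach_insert by auto
  next
    fix w assume "w \<in> {z. burst_reach q b x (Suc t) z}"
    then obtain z i y where "burst_reach q b x t z" "i \<le> length z" "y \<in> seqs q b"
      "w = take i z @ y @ drop i z"
      by (auto elim: burst_reach_SucE)
    then have "z \<in> burst_ins_ball q b t x" "w \<in> burst_ins q b z"
      using Suc unfolding burst_ins_def by blast+
    then show "w \<in> burst_ins_ball q b (Suc t) x" by auto
  qed
qed

declare burst_ins_ball.simps(2) [simp del]

lemma burst_reach_length_set:
  "burst_reach q b x t z \<Longrightarrow> length z = length x + t * b \<and> set z \<subseteq> set x \<union> {0..<q}"
  by (induction rule: burst_reach.induct) (auto simp: seqs_def)

lemma burst_reach_prepend:
  "p \<in> seqs q (k * b) \<Longrightarrow> burst_reach q b x t z \<Longrightarrow> burst_reach q b x (t + k) (p @ z)"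
proof (induction k arbitrary: p)
  case 0
  then show ?case by (simp add: seqs_def)
next
  case (Suc k)
  have lp: "length p = b + k * b" using Suc.prems by (simp add: seqs_def)
  have "drop b p \<in> seqs q (k * b)" "take b p \<in> seqs q b"
    using Suc.prems lp by (auto simp: seqs_def dest: in_set_dropD in_set_takeD)
  from burst_reach.Burst[OF Suc.IH[OF this(1) Suc.prems(2)] this(2)] show ?case
    by (metis append.assoc append_take_drop_id add_Suc_right)
qed

lemma burst_reach_ConsE:
  assumes "burst_reach q b (a # x) t z"
  obtains k p z' where "k \<le> t" "p \<in> seqs q (k * b)" "z = p @ a # z'"
    "burst_reach q b x (t - k) z'"
proof -
  have "burst_reach q b x0 t z \<Longrightarrow> x0 = a # x \<Longrightarrow>
    \<exists>k p z'. k \<le> t \<and> p \<in> seqs q (k * b) \<and> z = p @ a # z' \<and> burst_reach q b x (t - k) z'"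
    for x0
  proof (induction rule: burst_reach.induct)
    case (Cons x' t z a')
    then show ?case by (intro exI[of _ 0] exI[of _ "[]"] exI[of _ z]) (auto simp: seqs_def)
  next
    case (Burst x' t z y)
    then obtain k p z' where "k \<le> t" "p \<in> seqs q (k * b)" "z = p @ a # z'"
      "burst_reach q b x (t - k) z'" by blast
    then show ?case using Burst.hyps(2)
      by (intro exI[of _ "Suc k"] exI[of _ "y @ p"] exI[of _ z']) (auto simp: seqs_def)
  qed simp
  with assms that show ?thesis by blast
qed

lemma burst_reach_absorb:
  assumes "burst_reach q b (a # x) t z" "a < q" "v \<in> seqs q (b - 1)" "b \<ge> 1"
  shows "burst_reach q b x (Suc t) (v @ z)"
proof -
  obtain k p z' where k: "k \<le> t" "p \<in> seqs q (k * b)" "z = p @ a # z'"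
    "burst_reach q b x (t - k) z'"
    using burst_reach_ConsE[OF assms(1)] by blast
  have "v @ p @ [a] \<in> seqs q (Suc k * b)" using k(2) assms(2-4) by (auto simp: seqs_def)
  from burst_reach_prepend[OF this k(4)] show ?thesis using k by simp
qed

lemma burst_reach_Cons_Cons_iff:
  assumes "b \<ge> 1"
  shows "burst_reach q b (a # x) t (a # z) \<longleftrightarrow> burst_reach q b x t z"
proof
  have "burst_reach q b x0 t w \<Longrightarrow> x0 = a # x \<Longrightarrow> w = a # z \<Longrightarrow> burst_reach q b x t z"
    for x0 w z t
  proof (induction arbitrary: z rule: burst_reach.induct)
    case (Burst x' t z' y)
    from Burst.prems Burst.hyps(2) assms obtain y' where y: "y = a # y'" "z = y' @ z'"
      by (cases y) (auto simp: seqs_def)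
    have "a < q" "y' \<in> seqs q (b - 1)" using Burst.hyps(2) y by (auto simp: seqs_def)
    from burst_reach_absorb[OF Burst.hyps(1)[unfolded Burst.prems(1)] this assms] show ?case
      using y by simp
  qed auto
  then show "burst_reach q b (a # x) t (a # z) \<Longrightarrow> burst_reach q b x t z" by blast
qed (rule burst_reach.Cons)

lemma burst_reach_Cons_other_iff:
  assumes "b \<ge> 1" "x = [] \<or> hd x \<noteq> s"
  shows "burst_reach q b x (Suc t) (s # z) \<longleftrightarrow>
    s < q \<and> (\<exists>u z'. z = u @ z' \<and> u \<in> seqs q (b - 1) \<and> burst_reach q b x t z')"
proof
  have "burst_reach q b x t' w \<Longrightarrow> w = s # z \<Longrightarrow> t' = Suc t \<Longrightarrow> (x = [] \<or> hd x \<noteq> s) \<Longrightarrow>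
    s < q \<and> (\<exists>u z'. z = u @ z' \<and> u \<in> seqs q (b - 1) \<and> burst_reach q b x t z')" for t' w z
  proof (induction arbitrary: z rule: burst_reach.induct)
    case (Burst x' t z' y)
    from Burst.prems Burst.hyps(2) assms(1) obtain y' where "y = s # y'" "z = y' @ z'"
      by (cases y) (auto simp: seqs_def)
    then show ?case using Burst.hyps Burst.prems
      by (intro conjI exI[of _ y'] exI[of _ z']) (auto simp: seqs_def)
  qed auto
  then show "burst_reach q b x (Suc t) (s # z) \<Longrightarrow>
    s < q \<and> (\<exists>u z'. z = u @ z' \<and> u \<in> seqs q (b - 1) \<and> burst_reach q b x t z')"
    using assms(2) by blast
next
  assume "s < q \<and> (\<exists>u z'. z = u @ z' \<and> u \<in> seqs q (b - 1) \<and> burst_reach q b x t z')"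
  then obtain u z' where h: "s < q" "z = u @ z'" "u \<in> seqs q (b - 1)" "burst_reach q b x t z'"
    by blast
  have "s # u \<in> seqs q b" using h assms(1) by (auto simp: seqs_def)
  from burst_reach.Burst[OF h(4) this] show "burst_reach q b x (Suc t) (s # z)" using h by simp
qed

section \<open>Splitting a set of sequences by its first symbol\<close>

definition left_quot :: "'a \<Rightarrow> 'a list set \<Rightarrow> 'a list set" where
  "left_quot s S = {z. s # z \<in> S}"

definition free_prefix :: "nat \<Rightarrow> nat \<Rightarrow> nat list set \<Rightarrow> nat list set" where
  "free_prefix q m S = {u @ z | u z. u \<in> seqs q m \<and> z \<in> S}"

lemma left_quot_Int: "left_quot s (A \<inter> B) = left_quot s A \<inter> left_quot s B"
  by (auto simp: left_quot_def)

lemma free_prefix_Int: "free_prefix q m (A \<inter> B) = free_prefix q m A \<inter> free_prefix q m B"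
proof
  show "free_prefix q m A \<inter> free_prefix q m B \<subseteq> free_prefix q m (A \<inter> B)"
  proof
    fix w assume "w \<in> free_prefix q m A \<inter> free_prefix q m B"
    then obtain u1 z1 u2 z2 where h: "w = u1 @ z1" "u1 \<in> seqs q m" "z1 \<in> A"
      "w = u2 @ z2" "u2 \<in> seqs q m" "z2 \<in> B" unfolding free_prefix_def by blast
    have "length u1 = length u2" using h(2,5) by (simp add: seqs_def)
    then have "u1 = u2 \<and> z1 = z2" using h(1,4) by simp
    then show "w \<in> free_prefix q m (A \<inter> B)" using h unfolding free_prefix_def by blast
  qed
qed (auto simp: free_prefix_def)

lemma finite_seqs: "finite (seqs q m)"
  unfolding seqs_def using finite_lists_length_eq[of "{0..<q}" m] by (simp add: conj_commute)

lemma card_seqs: "card (seqs q m) = q ^ m"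
  unfolding seqs_def using card_lists_length_eq[of "{0..<q}" m] by (simp add: conj_commute)

lemma free_prefix_eq_image: "free_prefix q m S = (\<lambda>(u, z). u @ z) ` (seqs q m \<times> S)"
  unfolding free_prefix_def by auto

lemma finite_free_prefix: "finite S \<Longrightarrow> finite (free_prefix q m S)"
  unfolding free_prefix_eq_image using finite_seqs by simp

lemma card_free_prefix:
  assumes "finite S"
  shows "card (free_prefix q m S) = q ^ m * card S"
proof -
  have "inj_on (\<lambda>(u, z). u @ z) (seqs q m \<times> S)"
    by (auto simp: inj_on_def seqs_def)
  then have "card (free_prefix q m S) = card (seqs q m \<times> S)"
    unfolding free_prefix_eq_image by (rule card_image)
  also have "\<dots> = q ^ m * card S" by (simp add: card_cartesian_product card_seqs)
  finally show ?thesis .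
qed

lemma card_eq_sum_left_quot:
  fixes S :: "nat list set"
  assumes "finite S" "\<And>z. z \<in> S \<Longrightarrow> z \<noteq> [] \<and> hd z < q"
  shows "card S = (\<Sum>s<q. card (left_quot s S))"
proof -
  have S: "S = (\<Union>s<q. (#) s ` left_quot s S)"
  proof (intro set_eqI iffI)
    fix z assume "z \<in> S"
    with assms(2) obtain s z' where "z = s # z'" "s < q" by (cases z) fastforce+
    with \<open>z \<in> S\<close> show "z \<in> (\<Union>s<q. (#) s ` left_quot s S)" by (auto simp: left_quot_def)
  qed (auto simp: left_quot_def)
  have fin: "finite (left_quot s S)" for s
    unfolding left_quot_def using finite_vimageI[OF assms(1), of "(#) s"] by (simp add: vimage_def)
  have "card S = (\<Sum>s<q. card ((#) s ` left_quot s S))"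
    by (subst S, rule card_UN_disjoint) (auto simp: fin)
  also have "\<dots> = (\<Sum>s<q. card (left_quot s S))"
    by (rule sum.cong) (auto intro: card_image)
  finally show ?thesis .
qed

lemma sum_lessThan_remove2:
  fixes f :: "nat \<Rightarrow> 'b :: comm_monoid_add"
  assumes "a < q" "a' < q" "a \<noteq> a'"
  shows "(\<Sum>s<q. f s) = f a + f a' + (\<Sum>s \<in> {..<q} - {a, a'}. f s)"
proof -
  have "(\<Sum>s<q. f s) = f a + (\<Sum>s \<in> {..<q} - {a}. f s)" using assms by (intro sum.remove) auto
  also have "(\<Sum>s \<in> {..<q} - {a}. f s) = f a' + (\<Sum>s \<in> {..<q} - {a} - {a'}. f s)"
    using assms by (intro sum.remove) auto
  finally show ?thesis by (simp add: Diff_insert2[symmetric] insert_commute add.assoc)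
qed

lemma finite_burst_ins_ball: "finite (burst_ins_ball q b t x)"
proof (rule finite_subset)
  show "burst_ins_ball q b t x \<subseteq> {z. set z \<subseteq> set x \<union> {0..<q} \<and> length z = length x + t * b}"
    unfolding burst_ins_ball_eq_reach using burst_reach_length_set by blast
  show "finite {z. set z \<subseteq> set x \<union> {0..<q} \<and> length z = length x + t * b}"
    by (rule finite_lists_length_eq) simp
qed

lemma burst_ins_ball_hd:
  assumes "x \<in> seqs q n" "x \<noteq> [] \<or> t > 0" "b \<ge> 1" "z \<in> burst_ins_ball q b t x"
  shows "z \<noteq> [] \<and> hd z < q"
proof -
  have l: "length z = length x + t * b" "set z \<subseteq> set x \<union> {0..<q}"
    using assms(4) burst_reach_length_set unfolding burst_ins_ball_eq_reach by blast+
  then have "z \<noteq> []" using assms(2,3) by auto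
  moreover from this have "hd z \<in> set z" by simp
  then have "hd z \<in> {0..<q}" using l(2) assms(1) unfolding seqs_def by blast
  ultimately show ?thesis by simp
qed

lemma card_eq_sum_left_quot_ball:
  assumes "x \<in> seqs q n" "x \<noteq> [] \<or> t > 0" "b \<ge> 1" "S \<subseteq> burst_ins_ball q b t x"
  shows "card S = (\<Sum>s<q. card (left_quot s S))"
proof (rule card_eq_sum_left_quot)
  show "finite S" using assms(4) finite_burst_ins_ball by (rule finite_subset)
  show "z \<in> S \<Longrightarrow> z \<noteq> [] \<and> hd z < q" for z using assms burst_ins_ball_hd by blast
qed

lemma left_quot_burst_ins_ball_same:
  "b \<ge> 1 \<Longrightarrow> left_quot a (burst_ins_ball q b t (a # x)) = burst_ins_ball q b t x"
  by (auto simp: left_quot_def burst_ins_ball_eq_reach burst_reach_Cons_Cons_iff)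

lemma left_quot_burst_ins_ball_other:
  "b \<ge> 1 \<Longrightarrow> s < q \<Longrightarrow> x = [] \<or> hd x \<noteq> s \<Longrightarrow>
    left_quot s (burst_ins_ball q b (Suc t) x) = free_prefix q (b - 1) (burst_ins_ball q b t x)"
  unfolding left_quot_def free_prefix_def burst_ins_ball_eq_reach
  by (auto simp: burst_reach_Cons_other_iff)

lemma free_prefix_burst_ins_ball_subset:
  "b \<ge> 1 \<Longrightarrow> a < q \<Longrightarrow>
    free_prefix q (b - 1) (burst_ins_ball q b t (a # x)) \<subseteq> burst_ins_ball q b (Suc t) x"
  unfolding free_prefix_def burst_ins_ball_eq_reach using burst_reach_absorb by blast

lemma card_left_quot_burst_ins_ball_other:
  "b \<ge> 1 \<Longrightarrow> s < q \<Longrightarrow> x = [] \<or> hd x \<noteq> s \<Longrightarrow>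
    card (left_quot s (burst_ins_ball q b (Suc t) x)) = q ^ (b - 1) * card (burst_ins_ball q b t x)"
  by (simp add: left_quot_burst_ins_ball_other card_free_prefix finite_burst_ins_ball)

lemma card_left_quot_Int_other:
  assumes "b \<ge> 1" "s < q" "x = [] \<or> hd x \<noteq> s" "y = [] \<or> hd y \<noteq> s"
  shows "card (left_quot s (burst_ins_ball q b (Suc t) x \<inter> burst_ins_ball q b (Suc t) y)) =
    q ^ (b - 1) * card (burst_ins_ball q b t x \<inter> burst_ins_ball q b t y)"
  using assms
  by (simp add: left_quot_Int left_quot_burst_ins_ball_other free_prefix_Int[symmetric]
      card_free_prefix finite_burst_ins_ball)

lemma card_left_quot_Int_head_le:
  assumes "b \<ge> 1" "s < q" "y = [] \<or> hd y \<noteq> s"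
  shows "card (left_quot s (burst_ins_ball q b (Suc t) x \<inter> burst_ins_ball q b (Suc t) y)) \<le>
    q ^ (b - 1) * card (burst_ins_ball q b t y)"
proof -
  have "card (left_quot s (burst_ins_ball q b (Suc t) x \<inter> burst_ins_ball q b (Suc t) y)) \<le>
      card (left_quot s (burst_ins_ball q b (Suc t) y))"
    unfolding left_quot_Int
    by (intro card_mono) (auto simp: left_quot_burst_ins_ball_other[OF assms]
        finite_free_prefix finite_burst_ins_ball)
  with card_left_quot_burst_ins_ball_other[OF assms] show ?thesis by simp
qed

text \<open>For the pair \<open>s w\<close>, \<open>s' w\<close> the bound above is attained.\<close>

lemma left_quot_Int_head_eq:
  assumes "b \<ge> 1" "s < q" "s' < q" "s' \<noteq> s"
  shows "left_quot s (burst_ins_ball q b (Suc t) (s # w) \<inter> burst_ins_ball q b (Suc t) (s' # w)) =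
    free_prefix q (b - 1) (burst_ins_ball q b t (s' # w))"
  using free_prefix_burst_ins_ball_subset[OF assms(1,3), of t w] assms
  by (auto simp: left_quot_Int left_quot_burst_ins_ball_same left_quot_burst_ins_ball_other)

section \<open>The size of an insertion ball\<close>

text \<open>\<open>ball_count q n t\<close> and \<open>overlap_count q n t\<close> are \<open>|\<I>\<^sub>t(x)|\<close> and the maximal overlap
  \<open>N\<^sup>+(n,t)\<close>, both divided by \<open>q\<^bsup>t(b-1)\<^esup>\<close> (they do not depend on \<open>b\<close>).\<close>

fun ball_count :: "nat \<Rightarrow> nat \<Rightarrow> nat \<Rightarrow> nat" where
  "ball_count q 0 t = q ^ t"
| "ball_count q (Suc n) 0 = 1"
| "ball_count q (Suc n) (Suc t) = ball_count q n (Suc t) + (q - 1) * ball_count q (Suc n) t"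

fun overlap_count :: "nat \<Rightarrow> nat \<Rightarrow> nat \<Rightarrow> nat" where
  "overlap_count q n 0 = 0"
| "overlap_count q n (Suc t) = 2 * ball_count q n t + (q - 2) * overlap_count q n t"

lemma ball_count_0_right [simp]: "ball_count q n 0 = 1"
  by (cases n) auto

lemma overlap_count_Suc_Suc:
  "overlap_count q (Suc n) (Suc t) = overlap_count q n (Suc t) + (q - 1) * overlap_count q (Suc n) t"
proof (induction t)
  case (Suc t)
  let ?K = "ball_count q" and ?G = "overlap_count q"
  have "?G (Suc n) (Suc (Suc t)) = 2 * ?K (Suc n) (Suc t) + (q - 2) * ?G (Suc n) (Suc t)"
    by (simp only: overlap_count.simps)
  also have "\<dots> = 2 * (?K n (Suc t) + (q - 1) * ?K (Suc n) t)
      + (q - 2) * (?G n (Suc t) + (q - 1) * ?G (Suc n) t)"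
    by (simp only: ball_count.simps Suc.IH)
  also have "\<dots> = (2 * ?K n (Suc t) + (q - 2) * ?G n (Suc t))
      + (q - 1) * (2 * ?K (Suc n) t + (q - 2) * ?G (Suc n) t)"
    by (simp only: distrib_left mult_ac add_ac)
  finally show ?case by (simp only: overlap_count.simps)
qed simp

lemma card_burst_ins_ball:
  assumes "b \<ge> 1" "x \<in> seqs q n"
  shows "card (burst_ins_ball q b t x) = (q ^ (b - 1)) ^ t * ball_count q n t"
  using assms(2)
proof (induction t arbitrary: x n)
  case 0
  then show ?case by simp
next
  case (Suc t)
  let ?c = "q ^ (b - 1)"
  show ?case using Suc.prems
  proof (induction x arbitrary: n)
    case Nil
    then have "n = 0" by (simp add: seqs_def)
    have "card (burst_ins_ball q b (Suc t) []) = (\<Sum>s<q. card (left_quot s (burst_ins_ball q b (Suc t) [])))"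
      using card_eq_sum_left_quot_ball[OF Nil.prems _ assms(1)] by blast
    also have "\<dots> = (\<Sum>s<q. ?c * card (burst_ins_ball q b t []))"
      by (intro sum.cong refl card_left_quot_burst_ins_ball_other assms(1)) auto
    also have "\<dots> = ?c ^ Suc t * q ^ Suc t"
      using Suc.IH[OF Nil.prems] \<open>n = 0\<close> by (simp add: algebra_simps)
    finally show ?case using \<open>n = 0\<close> by simp
  next
    case (Cons a x)
    then obtain n' where n': "n = Suc n'" "x \<in> seqs q n'" "a < q" by (cases n) (auto simp: seqs_def)
    let ?B = "burst_ins_ball q b (Suc t) (a # x)"
    have "card ?B = (\<Sum>s<q. card (left_quot s ?B))"
      using card_eq_sum_left_quot_ball[OF Cons.prems _ assms(1)] by blast
    also have "\<dots> = card (left_quot a ?B) + (\<Sum>s \<in> {..<q} - {a}. card (left_quot s ?B))"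
      using n'(3) by (intro sum.remove) auto
    also have "(\<Sum>s \<in> {..<q} - {a}. card (left_quot s ?B)) =
        (\<Sum>s \<in> {..<q} - {a}. ?c * card (burst_ins_ball q b t (a # x)))"
      by (intro sum.cong refl card_left_quot_burst_ins_ball_other assms(1)) auto
    also have "card (left_quot a ?B) = ?c ^ Suc t * ball_count q n' (Suc t)"
      using Cons.IH[OF n'(2)] by (simp add: left_quot_burst_ins_ball_same[OF assms(1)])
    finally show ?case using Suc.IH[OF Cons.prems] n' by (simp add: algebra_simps)
  qed
qed

section \<open>The overlap of two insertion balls\<close>

lemma card_burst_ins_ball_Int_Cons_same:
  assumes "b \<ge> 1" "a # x \<in> seqs q n"
  shows "card (burst_ins_ball q b (Suc t) (a # x) \<inter> burst_ins_ball q b (Suc t) (a # y)) =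
    card (burst_ins_ball q b (Suc t) x \<inter> burst_ins_ball q b (Suc t) y) +
    (q - 1) * (q ^ (b - 1) * card (burst_ins_ball q b t (a # x) \<inter> burst_ins_ball q b t (a # y)))"
proof -
  let ?S = "burst_ins_ball q b (Suc t) (a # x) \<inter> burst_ins_ball q b (Suc t) (a # y)"
  have a: "a < q" using assms(2) by (simp add: seqs_def)
  have "card ?S = (\<Sum>s<q. card (left_quot s ?S))"
    using card_eq_sum_left_quot_ball[OF assms(2) _ assms(1)] by blast
  also have "\<dots> = card (left_quot a ?S) + (\<Sum>s \<in> {..<q} - {a}. card (left_quot s ?S))"
    using a by (intro sum.remove) auto
  also have "(\<Sum>s \<in> {..<q} - {a}. card (left_quot s ?S)) = (\<Sum>s \<in> {..<q} - {a}.
      q ^ (b - 1) * card (burst_ins_ball q b t (a # x) \<inter> burst_ins_ball q b t (a # y)))"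
    by (intro sum.cong refl card_left_quot_Int_other assms(1)) auto
  finally show ?thesis
    using a by (simp add: left_quot_Int left_quot_burst_ins_ball_same[OF assms(1)])
qed

lemma card_burst_ins_ball_Int_Cons_diff:
  fixes t :: nat
  assumes "b \<ge> 1" "a # x \<in> seqs q n" "a' # y \<in> seqs q n" "a \<noteq> a'"
  defines "S \<equiv> burst_ins_ball q b (Suc t) (a # x) \<inter> burst_ins_ball q b (Suc t) (a' # y)"
  shows "card S = card (left_quot a S) + card (left_quot a' S) +
    (q - 2) * (q ^ (b - 1) * card (burst_ins_ball q b t (a # x) \<inter> burst_ins_ball q b t (a' # y)))"
proof -
  have a: "a < q" "a' < q" using assms(2,3) by (simp_all add: seqs_def)
  have "card S = (\<Sum>s<q. card (left_quot s S))"
    using card_eq_sum_left_quot_ball[OF assms(2) _ assms(1)] unfolding S_def by blast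
  also have "\<dots> = card (left_quot a S) + card (left_quot a' S) +
      (\<Sum>s \<in> {..<q} - {a, a'}. card (left_quot s S))"
    by (rule sum_lessThan_remove2[OF a assms(4)])
  also have "(\<Sum>s \<in> {..<q} - {a, a'}. card (left_quot s S)) = (\<Sum>s \<in> {..<q} - {a, a'}.
      q ^ (b - 1) * card (burst_ins_ball q b t (a # x) \<inter> burst_ins_ball q b t (a' # y)))"
    unfolding S_def by (intro sum.cong refl card_left_quot_Int_other assms(1)) auto
  moreover have "card ({..<q} - {a, a'}) = q - 2"
    using a assms(4) by (simp add: card_Diff_subset numeral_2_eq_2)
  ultimately show ?thesis by simp
qed

lemma card_burst_ins_ball_Int_Cons_diff_le:
  assumes "b \<ge> 1" "a # x \<in> seqs q n" "a' # y \<in> seqs q n" "a \<noteq> a'"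
  shows "card (burst_ins_ball q b (Suc t) (a # x) \<inter> burst_ins_ball q b (Suc t) (a' # y)) \<le>
    2 * (q ^ (b - 1) * ((q ^ (b - 1)) ^ t * ball_count q n t)) +
    (q - 2) * (q ^ (b - 1) * card (burst_ins_ball q b t (a # x) \<inter> burst_ins_ball q b t (a' # y)))"
proof -
  let ?c = "q ^ (b - 1)"
  let ?S = "burst_ins_ball q b (Suc t) (a # x) \<inter> burst_ins_ball q b (Suc t) (a' # y)"
  have a: "a < q" "a' < q" using assms(2,3) by (simp_all add: seqs_def)
  have "card (left_quot a ?S) \<le> ?c * (?c ^ t * ball_count q n t)"
    using card_left_quot_Int_head_le[OF assms(1) a(1), of "a' # y" t "a # x"] assms(4)
      card_burst_ins_ball[OF assms(1,3)] by simp
  moreover have "card (left_quot a' ?S) \<le> ?c * (?c ^ t * ball_count q n t)"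
    using card_left_quot_Int_head_le[OF assms(1) a(2), of "a # x" t "a' # y"] assms(4)
      card_burst_ins_ball[OF assms(1,2)] by (simp add: Int_commute)
  ultimately show ?thesis
    using card_burst_ins_ball_Int_Cons_diff[OF assms] by simp
qed

lemma card_burst_ins_ball_Int_le:
  assumes "b \<ge> 1" "x \<in> seqs q n" "y \<in> seqs q n" "x \<noteq> y"
  shows "card (burst_ins_ball q b t x \<inter> burst_ins_ball q b t y) \<le>
    (q ^ (b - 1)) ^ t * overlap_count q n t"
  using assms(2-4)
proof (induction t arbitrary: x y n)
  case 0
  then show ?case by simp
next
  case (Suc t)
  let ?c = "q ^ (b - 1)"
  show ?case using Suc.prems
  proof (induction x arbitrary: n y)
    case Nil
    then show ?case by (simp add: seqs_def)
  next
    case (Cons a x)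
    obtain n' where n': "n = Suc n'" "x \<in> seqs q n'"
      using Cons.prems(1) by (cases n) (auto simp: seqs_def)
    obtain a' y' where y: "y = a' # y'" "y' \<in> seqs q n'"
      using Cons.prems(2) n'(1) by (cases y) (auto simp: seqs_def)
    let ?S = "burst_ins_ball q b (Suc t) (a # x) \<inter> burst_ins_ball q b (Suc t) y"
    have IH: "card (burst_ins_ball q b t (a # x) \<inter> burst_ins_ball q b t y) \<le>
        ?c ^ t * overlap_count q n t"
      using Suc.IH[OF Cons.prems] .
    show ?case
    proof (cases "a = a'")
      case True
      have "card ?S = card (burst_ins_ball q b (Suc t) x \<inter> burst_ins_ball q b (Suc t) y') +
          (q - 1) * (?c * card (burst_ins_ball q b t (a # x) \<inter> burst_ins_ball q b t y))"
        using card_burst_ins_ball_Int_Cons_same[OF assms(1) Cons.prems(1)] y True by simp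
      also have "\<dots> \<le> ?c ^ Suc t * overlap_count q n' (Suc t) +
          (q - 1) * (?c * (?c ^ t * overlap_count q n t))"
        using Cons.IH[OF n'(2) y(2)] Cons.prems(3) y True IH
        by (intro add_mono mult_le_mono2) auto
      also have "\<dots> = ?c ^ Suc t * (overlap_count q n' (Suc t) + (q - 1) * overlap_count q n t)"
        by (simp only: power_Suc distrib_left mult_ac)
      also have "\<dots> = ?c ^ Suc t * overlap_count q n (Suc t)"
        by (simp only: n'(1) overlap_count_Suc_Suc)
      finally show ?thesis .
    next
      case False
      have "card ?S \<le> 2 * (?c * (?c ^ t * ball_count q n t)) +
          (q - 2) * (?c * card (burst_ins_ball q b t (a # x) \<inter> burst_ins_ball q b t y))"
        using card_burst_ins_ball_Int_Cons_diff_le[OF assms(1) Cons.prems(1)] Cons.prems(2) y False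
        by simp
      also have "\<dots> \<le> 2 * (?c * (?c ^ t * ball_count q n t)) +
          (q - 2) * (?c * (?c ^ t * overlap_count q n t))"
        using IH by simp
      finally show ?thesis by (simp add: distrib_left mult_ac)
    qed
  qed
qed

lemma card_burst_ins_ball_Int_witness:
  assumes "b \<ge> 1" "q \<ge> 2" "w \<in> seqs q m"
  shows "card (burst_ins_ball q b t (0 # w) \<inter> burst_ins_ball q b t (1 # w)) =
    (q ^ (b - 1)) ^ t * overlap_count q (Suc m) t"
proof (induction t)
  case 0
  then show ?case by simp
next
  case (Suc t)
  let ?c = "q ^ (b - 1)"
  let ?S = "burst_ins_ball q b (Suc t) (0 # w) \<inter> burst_ins_ball q b (Suc t) (1 # w)"
  have xy: "0 # w \<in> seqs q (Suc m)" "1 # w \<in> seqs q (Suc m)"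
    using assms by (auto simp: seqs_def)
  have q: "0 < q" "1 < q" using assms(2) by auto
  have "card (left_quot 0 ?S) = ?c * (?c ^ t * ball_count q (Suc m) t)"
    using left_quot_Int_head_eq[OF assms(1) q, of t w] card_burst_ins_ball[OF assms(1) xy(2)]
    by (simp add: card_free_prefix finite_burst_ins_ball)
  moreover have "card (left_quot 1 ?S) = ?c * (?c ^ t * ball_count q (Suc m) t)"
    using left_quot_Int_head_eq[OF assms(1) q(2,1), of t w] card_burst_ins_ball[OF assms(1) xy(1)]
    by (simp add: card_free_prefix finite_burst_ins_ball Int_commute)
  ultimately show ?case
    using card_burst_ins_ball_Int_Cons_diff[OF assms(1) xy, of t] Suc.IH
    by (simp add: distrib_left mult_ac)
qed

lemma N_plus_eq_overlap_count:
  assumes "n \<ge> 1" "q \<ge> 2" "b \<ge> 1"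
  shows "N_plus q b n t = (q ^ (b - 1)) ^ t * overlap_count q n t"
  unfolding N_plus_def
proof (rule Max_eqI)
  let ?f = "\<lambda>(x, y). card (burst_ins_ball q b t x \<inter> burst_ins_ball q b t y)"
  show "finite {card (burst_ins_ball q b t x \<inter> burst_ins_ball q b t y) |x y.
      x \<in> seqs q n \<and> y \<in> seqs q n \<and> x \<noteq> y}"
    by (rule finite_subset[of _ "?f ` (seqs q n \<times> seqs q n)"]) (auto simp: finite_seqs)
  show "k \<le> (q ^ (b - 1)) ^ t * overlap_count q n t"
    if "k \<in> {card (burst_ins_ball q b t x \<inter> burst_ins_ball q b t y) |x y.
      x \<in> seqs q n \<and> y \<in> seqs q n \<and> x \<noteq> y}" for k
    using that card_burst_ins_ball_Int_le[OF assms(3)] by blast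
  obtain m where m: "n = Suc m" using assms(1) by (cases n) auto
  define w where "w = replicate m (0::nat)"
  have w: "w \<in> seqs q m" "0 # w \<in> seqs q n" "1 # w \<in> seqs q n"
    using assms(2) m by (auto simp: seqs_def w_def)
  have "(q ^ (b - 1)) ^ t * overlap_count q n t =
      card (burst_ins_ball q b t (0 # w) \<inter> burst_ins_ball q b t (1 # w))"
    using card_burst_ins_ball_Int_witness[OF assms(3,2) w(1)] m by simp
  with w(2,3) show "(q ^ (b - 1)) ^ t * overlap_count q n t \<in>
      {card (burst_ins_ball q b t x \<inter> burst_ins_ball q b t y) |x y.
        x \<in> seqs q n \<and> y \<in> seqs q n \<and> x \<noteq> y}"
    by (intro CollectI exI[of _ "0 # w"] exI[of _ "1 # w"]) simp
qed

section \<open>The closed form\<close>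

definition overlap_sum :: "nat \<Rightarrow> nat \<Rightarrow> nat \<Rightarrow> int" where
  "overlap_sum q n t = (\<Sum>i<t. int ((n + t) choose i) * (int q - 1) ^ i * (1 - (-1) ^ (t - i)))"

lemma overlap_sum_Suc_Suc:
  "overlap_sum q (Suc n) (Suc t) = overlap_sum q n (Suc t) + (int q - 1) * overlap_sum q (Suc n) t"
proof -
  define a where "a = int q - 1"
  define e where "e k = (1 - (-1) ^ k :: int)" for k
  have L: "overlap_sum q (Suc n) (Suc t) = e (Suc t) + (\<Sum>j<t.
      (int (Suc (n + t) choose j) + int (Suc (n + t) choose Suc j)) * a ^ Suc j * e (t - j))"
    unfolding overlap_sum_def a_def e_def
    by (simp add: sum.lessThan_Suc_shift del: sum.lessThan_Suc)
  have M: "overlap_sum q n (Suc t) =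
      e (Suc t) + (\<Sum>j<t. int (Suc (n + t) choose Suc j) * a ^ Suc j * e (t - j))"
    unfolding overlap_sum_def a_def e_def
    by (simp add: sum.lessThan_Suc_shift del: sum.lessThan_Suc)
  have N: "a * overlap_sum q (Suc n) t = (\<Sum>j<t. int (Suc (n + t) choose j) * a ^ Suc j * e (t - j))"
    unfolding overlap_sum_def a_def e_def by (simp add: sum_distrib_left algebra_simps)
  show ?thesis unfolding a_def[symmetric] L M N by (simp add: sum.distrib algebra_simps)
qed

lemma overlap_sum_0_left: "overlap_sum q 0 t = int q ^ t - (int q - 2) ^ t"
proof -
  define a where "a = int q - 1"
  have "overlap_sum q 0 t = (\<Sum>i\<le>t. of_nat (t choose i) * a ^ i * (1 - (-1) ^ (t - i)))"
    unfolding overlap_sum_def a_def by (simp add: lessThan_Suc_atMost[symmetric])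
  also have "\<dots> = (\<Sum>i\<le>t. of_nat (t choose i) * a ^ i * 1 ^ (t - i)) -
      (\<Sum>i\<le>t. of_nat (t choose i) * a ^ i * (-1) ^ (t - i))"
    by (simp add: sum_subtractf algebra_simps)
  also have "\<dots> = (a + 1) ^ t - (a + (-1)) ^ t" by (simp only: binomial_ring)
  finally show ?thesis unfolding a_def by simp
qed

lemma overlap_count_0_left:
  assumes "q \<ge> 2"
  shows "int (overlap_count q 0 t) = int q ^ t - (int q - 2) ^ t"
proof (induction t)
  case (Suc t)
  have "int (overlap_count q 0 (Suc t)) = 2 * int q ^ t + (int q - 2) * int (overlap_count q 0 t)"
    using assms by (simp add: of_nat_diff)
  also have "\<dots> = int q ^ Suc t - (int q - 2) ^ Suc t"
    by (simp only: Suc.IH) (simp add: algebra_simps)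
  finally show ?case .
qed simp

lemma overlap_count_eq_overlap_sum:
  assumes "q \<ge> 2"
  shows "int (overlap_count q n t) = overlap_sum q n t"
proof (induction n arbitrary: t)
  case 0
  then show ?case using assms by (simp add: overlap_count_0_left overlap_sum_0_left)
next
  case (Suc n)
  show ?case
  proof (induction t)
    case 0
    then show ?case by (simp add: overlap_sum_def)
  next
    case (Suc t)
    then show ?case using assms \<open>\<And>t. int (overlap_count q n t) = overlap_sum q n t\<close>
      by (simp add: overlap_count_Suc_Suc overlap_sum_Suc_Suc of_nat_diff del: overlap_count.simps)
  qed
qed

theorem theorem3p3:
  fixes q b n t :: nat
  assumes "n \<ge> 1" and "t \<ge> 1" and "q \<ge> 2" and "b \<ge> 1"
  shows "int (N_plus q b n t) =
    int q ^ (t * (b - 1)) *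
      (\<Sum>i = 0..t - 1. int ((n + t) choose i) * (int q - 1) ^ i * (1 - (-1) ^ (t - i)))"
proof -
  have "int (N_plus q b n t) = int q ^ (t * (b - 1)) * overlap_sum q n t"
    using N_plus_eq_overlap_count[OF assms(1,3,4)] overlap_count_eq_overlap_sum[OF assms(3)]
    by (simp add: power_mult mult.commute[of t])
  moreover have "{0..t - 1} = {..<t}" using assms(2) by auto
  ultimately show ?thesis by (simp add: overlap_sum_def)
qed

end
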